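(* Let $q\geq4$ be an even integer and let $(X,\{R_i\}_{i=0}^3)$ be a symmetric 3-class association scheme with adjacency matrices $A_0=I,A_1,A_2,A_3$, intersection numbers $p_{ij}^k$, and first eigenmatrix \[ P=\begin{bmatrix}1&\frac{q^2}{2}-q&\frac{q^2}{2}&q-2\\ 1&\frac q2&-\frac q2&-1\\ 1&-\frac q2+1&-\frac q2&q-2\\ 1&-\frac q2&\frac q2&-1\end{bmatrix}. \] Let $W=I+\sum_{i=1}^3w_iA_i$ be a type-II matrix. Then \[ H(W)=\{w_i^{\pm2}\mid i=1,2,3\}\cup\left\{\left(\frac{w_{i_1}w_{i_2}}{w_{i_3}}\right)^{\pm1}\;\middle|\;1\leq i_1,i_2,i_3\leq3,\ p_{i_2,i_3}^{i_1}>0\right\}\cup\left\{\frac{w_{i_1}w_{i_2}}{w_{j_1}w_{j_2}}\;\middle|\;i_1,i_2,j_1,j_2\in\{1,2,3\}\right\}. \]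
   Context: An association scheme $(X,\{R_i\}_{i=0}^d)$ is a partition of $X\times X$ into relations $R_0=\{(x,x)\}$, $R_1,\dots,R_d$ such that for $(x,y)\in R_k$ the number $p_{ij}^k=|\{z:(x,z)\in R_i,(z,y)\in R_j\}|$ depends only on $i,j,k$; symmetric means each $R_i$ is symmetric; $A_i$ is the $(0,1)$-matrix of $R_i$. With primitive idempotents $E_0=\frac1{|X|}J,E_1,E_2,E_3$ of the span of the $A_i$, the first eigenmatrix is defined by $A_j=\sum_iP_{i,j}E_i$ (here $|X|=q^2-1$; the intersection numbers are determined by $P$). A type-II matrix is a square matrix $W$ of order $n$ with nonzero complex entries such that $W(W^{(-)})^\top=nI$, $W^{(-)}$ the entrywise inverse. The Haagerup set of $W$ (indexed by $X$) is \[ H(W)=\left\{\frac{W_{x_1,y_1}W_{x_2,y_2}}{W_{x_1,y_2}W_{x_2,y_1}}\;\middle|\;x_1,x_2,y_1,y_2\in X\right\}. \] *)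

theory Defs
  imports Complex_Main
begin

text \<open>An association scheme with d classes on a finite carrier X is given by a
  relation-index function R: R x y = i means (x,y) in R_i.\<close>

definition assoc_scheme :: "'a set \<Rightarrow> ('a \<Rightarrow> 'a \<Rightarrow> nat) \<Rightarrow> nat \<Rightarrow> bool" where
  "assoc_scheme X R d \<longleftrightarrow>
     finite X \<and> X \<noteq> {} \<and>
     (\<forall>x\<in>X. \<forall>y\<in>X. R x y \<le> d) \<and>
     (\<forall>x\<in>X. \<forall>y\<in>X. R x y = 0 \<longleftrightarrow> x = y) \<and>
     (\<forall>i\<le>d. \<exists>x\<in>X. \<exists>y\<in>X. R x y = i) \<and>
     (\<forall>i\<le>d. \<forall>j\<le>d. \<forall>x\<in>X. \<forall>y\<in>X. \<forall>x'\<in>X. \<forall>y'\<in>X.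
        R x y = R x' y' \<longrightarrow>
        card {z\<in>X. R x z = i \<and> R z y = j} = card {z\<in>X. R x' z = i \<and> R z y' = j})"

definition symmetric_scheme :: "'a set \<Rightarrow> ('a \<Rightarrow> 'a \<Rightarrow> nat) \<Rightarrow> bool" where
  "symmetric_scheme X R \<longleftrightarrow> (\<forall>x\<in>X. \<forall>y\<in>X. R x y = R y x)"

text \<open>Intersection number p_{ij}^k (well defined for an association scheme).\<close>
definition inter_num :: "'a set \<Rightarrow> ('a \<Rightarrow> 'a \<Rightarrow> nat) \<Rightarrow> nat \<Rightarrow> nat \<Rightarrow> nat \<Rightarrow> nat" where
  "inter_num X R i j k =
     (let (x, y) = (SOME (x, y). x \<in> X \<and> y \<in> X \<and> R x y = k)
      in card {z\<in>X. R x z = i \<and> R z y = j})"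

text \<open>Adjacency matrix A_i (complex matrices are functions on X \<times> X).\<close>
definition adj :: "('a \<Rightarrow> 'a \<Rightarrow> nat) \<Rightarrow> nat \<Rightarrow> 'a \<Rightarrow> 'a \<Rightarrow> complex" where
  "adj R i x y = (if R x y = i then 1 else 0)"

definition mmult :: "'a set \<Rightarrow> ('a \<Rightarrow> 'a \<Rightarrow> complex) \<Rightarrow> ('a \<Rightarrow> 'a \<Rightarrow> complex) \<Rightarrow> 'a \<Rightarrow> 'a \<Rightarrow> complex" where
  "mmult X M N x y = (\<Sum>z\<in>X. M x z * N z y)"

definition first_eigenmatrix ::
  "'a set \<Rightarrow> ('a \<Rightarrow> 'a \<Rightarrow> nat) \<Rightarrow> nat \<Rightarrow> (nat \<Rightarrow> nat \<Rightarrow> complex) \<Rightarrow> bool" where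
  "first_eigenmatrix X R d P \<longleftrightarrow>
     (\<exists>E :: nat \<Rightarrow> 'a \<Rightarrow> 'a \<Rightarrow> complex.
        (\<forall>x\<in>X. \<forall>y\<in>X. E 0 x y = 1 / of_nat (card X)) \<and>
        (\<forall>i\<le>d. \<exists>c :: nat \<Rightarrow> complex. \<forall>x\<in>X. \<forall>y\<in>X. E i x y = (\<Sum>j\<le>d. c j * adj R j x y)) \<and>
        (\<forall>i\<le>d. \<exists>x\<in>X. \<exists>y\<in>X. E i x y \<noteq> 0) \<and>
        (\<forall>i\<le>d. \<forall>j\<le>d. \<forall>x\<in>X. \<forall>y\<in>X.
            mmult X (E i) (E j) x y = (if i = j then E i x y else 0)) \<and>
        (\<forall>x\<in>X. \<forall>y\<in>X. (\<Sum>i\<le>d. E i x y) = (if x = y then 1 else 0)) \<and>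
        (\<forall>j\<le>d. \<forall>x\<in>X. \<forall>y\<in>X. adj R j x y = (\<Sum>i\<le>d. P i j * E i x y)))"

definition type_II :: "'a set \<Rightarrow> ('a \<Rightarrow> 'a \<Rightarrow> complex) \<Rightarrow> bool" where
  "type_II X W \<longleftrightarrow> (\<forall>x\<in>X. \<forall>y\<in>X. W x y \<noteq> 0) \<and>
     (\<forall>x\<in>X. \<forall>y\<in>X. (\<Sum>z\<in>X. W x z * inverse (W y z)) =
                     (if x = y then of_nat (card X) else 0))"

definition haagerup_set :: "'a set \<Rightarrow> ('a \<Rightarrow> 'a \<Rightarrow> complex) \<Rightarrow> complex set" where
  "haagerup_set X W = {W x1 y1 * W x2 y2 / (W x1 y2 * W x2 y1) | x1 x2 y1 y2.
                        x1 \<in> X \<and> x2 \<in> X \<and> y1 \<in> X \<and> y2 \<in> X}"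

definition P_q :: "nat \<Rightarrow> nat \<Rightarrow> nat \<Rightarrow> complex" where
  "P_q q i j = (let c = (of_nat q :: complex) in
     [[1, c^2/2 - c, c^2/2, c - 2],
      [1, c/2, - c/2, -1],
      [1, - c/2 + 1, - c/2, c - 2],
      [1, - c/2, c/2, -1]] ! i ! j)"

end

theory Submission
  imports Defs
begin

(* A Haagerup value is a cross ratio W x1 y1 * W x2 y2 / (W x1 y2 * W x2 y1), and an entry of W is 1
   on the diagonal and w i on R_i. When two of the four points coincide, the cross ratio is 1, a
   square w_i^(+-2) or a triangle quotient (w_i1 w_i2 / w_i3)^(+-1). Otherwise it is
   w_i1 w_i2 / (w_j1 w_j2), with y1 and y2 closing triangles of types (i1, j2) and (j1, i2) over
   the pair (x1, x2); such a quotient occurs iff p^k_{i1 j2} and p^k_{j1 i2} are positive for a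
   common k. The eigenmatrix determines the intersection numbers via P Q = 2q(q^2 - 1) I, and
   p^2_{ij} vanishes only for i = j = 3, which makes every quotient w_i1 w_i2 / (w_j1 w_j2) occur. *)

section \<open>Association schemes and their eigenmatrices\<close>

locale association_scheme =
  fixes X :: "'a set" and R :: "'a \<Rightarrow> 'a \<Rightarrow> nat" and d :: nat
  assumes scheme: "assoc_scheme X R d"
begin

lemma finite_X: "finite X"
  using scheme by (simp add: assoc_scheme_def)

lemma R_le: "x \<in> X \<Longrightarrow> y \<in> X \<Longrightarrow> R x y \<le> d"
  using scheme by (simp add: assoc_scheme_def)

lemma R_eq_0_iff: "x \<in> X \<Longrightarrow> y \<in> X \<Longrightarrow> R x y = 0 \<longleftrightarrow> x = y"
  using scheme by (simp add: assoc_scheme_def)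

lemma relation_nonempty:
  assumes "i \<le> d"
  obtains x y where "x \<in> X" "y \<in> X" "R x y = i"
proof -
  have "\<forall>i\<le>d. \<exists>x\<in>X. \<exists>y\<in>X. R x y = i"
    using scheme unfolding assoc_scheme_def by (elim conjE)
  then show thesis
    using that assms by blast
qed

lemma card_regular:
  assumes "i \<le> d" "j \<le> d" "x \<in> X" "y \<in> X" "x' \<in> X" "y' \<in> X" "R x y = R x' y'"
  shows "card {z\<in>X. R x z = i \<and> R z y = j} = card {z\<in>X. R x' z = i \<and> R z y' = j}"
proof -
  have "\<forall>i\<le>d. \<forall>j\<le>d. \<forall>x\<in>X. \<forall>y\<in>X. \<forall>x'\<in>X. \<forall>y'\<in>X. R x y = R x' y' \<longrightarrow>
          card {z\<in>X. R x z = i \<and> R z y = j} = card {z\<in>X. R x' z = i \<and> R z y' = j}"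
    using scheme unfolding assoc_scheme_def by (elim conjE)
  from this[rule_format, OF assms] show ?thesis .
qed

lemma inter_num_eq_card:
  assumes "x \<in> X" "y \<in> X" "i \<le> d" "j \<le> d"
  shows "inter_num X R i j (R x y) = card {z\<in>X. R x z = i \<and> R z y = j}"
proof -
  let ?P = "\<lambda>(a, b). a \<in> X \<and> b \<in> X \<and> R a b = R x y"
  obtain a b where ab: "(SOME p. ?P p) = (a, b)"
    by (cases "SOME p. ?P p") simp
  have "?P (SOME p. ?P p)"
    by (rule someI[of _ "(x, y)"]) (use assms in simp)
  then have "a \<in> X" "b \<in> X" "R a b = R x y"
    unfolding ab by simp_all
  then show ?thesis
    unfolding inter_num_def Let_def ab using card_regular[of i j a b x y] assms by simp
qed

lemma inter_num_pos_iff: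
  assumes "x \<in> X" "y \<in> X" "i \<le> d" "j \<le> d"
  shows "0 < inter_num X R i j (R x y) \<longleftrightarrow> (\<exists>z\<in>X. R x z = i \<and> R z y = j)"
  using assms finite_X by (auto simp: inter_num_eq_card card_gt_0_iff)

lemma obtain_triangle:
  assumes "0 < inter_num X R i j k" "i \<le> d" "j \<le> d" "k \<le> d"
  obtains x y z where "x \<in> X" "y \<in> X" "z \<in> X" "R x y = k" "R x z = i" "R z y = j"
proof -
  obtain x y where xy: "x \<in> X" "y \<in> X" "R x y = k"
    using relation_nonempty assms(4) .
  then show thesis
    using that inter_num_pos_iff[of x y i j] assms by auto
qed

lemma sum_adj_mult_adj:
  assumes "x \<in> X" "y \<in> X"
  shows "(\<Sum>z\<in>X. adj R i x z * adj R j z y) = of_nat (card {z\<in>X. R x z = i \<and> R z y = j})"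
proof -
  have "(\<Sum>z\<in>X. adj R i x z * adj R j z y) = (\<Sum>z\<in>X. if R x z = i \<and> R z y = j then 1 else 0)"
    by (intro sum.cong) (auto simp: adj_def)
  also have "\<dots> = of_nat (card {z\<in>X. R x z = i \<and> R z y = j})"
    using finite_X by (simp add: sum.If_cases Int_def)
  finally show ?thesis .
qed

lemma first_eigenmatrixE:
  assumes "first_eigenmatrix X R d P"
  obtains E where
    "\<And>i j x y. i \<le> d \<Longrightarrow> j \<le> d \<Longrightarrow> x \<in> X \<Longrightarrow> y \<in> X \<Longrightarrow>
       mmult X (E i) (E j) x y = (if i = j then E i x y else 0)"
    "\<And>j x y. j \<le> d \<Longrightarrow> x \<in> X \<Longrightarrow> y \<in> X \<Longrightarrow> adj R j x y = (\<Sum>i\<le>d. P i j * E i x y)"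
proof -
  obtain E where
    "\<forall>i\<le>d. \<forall>j\<le>d. \<forall>x\<in>X. \<forall>y\<in>X. mmult X (E i) (E j) x y = (if i = j then E i x y else 0)"
    "\<forall>j\<le>d. \<forall>x\<in>X. \<forall>y\<in>X. adj R j x y = (\<Sum>i\<le>d. P i j * E i x y)"
    using assms unfolding first_eigenmatrix_def by (elim exE conjE) (rule that)
  then show thesis
    by (intro that) simp_all
qed

lemma adj_product_eigen:
  assumes E_orth: "\<And>i j x y. i \<le> d \<Longrightarrow> j \<le> d \<Longrightarrow> x \<in> X \<Longrightarrow> y \<in> X \<Longrightarrow>
                     mmult X (E i) (E j) x y = (if i = j then E i x y else 0)"
    and adj_E: "\<And>j x y. j \<le> d \<Longrightarrow> x \<in> X \<Longrightarrow> y \<in> X \<Longrightarrow> adj R j x y = (\<Sum>i\<le>d. P i j * E i x y)"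
    and "x \<in> X" "y \<in> X" "i \<le> d" "j \<le> d"
  shows "of_nat (inter_num X R i j (R x y)) = (\<Sum>l\<le>d. P l i * P l j * E l x y)"
proof -
  have "of_nat (inter_num X R i j (R x y)) = (\<Sum>z\<in>X. adj R i x z * adj R j z y)"
    using assms(3-6) by (simp add: inter_num_eq_card sum_adj_mult_adj)
  also have "\<dots> = (\<Sum>z\<in>X. \<Sum>l\<le>d. \<Sum>n\<le>d. P l i * P n j * (E l x z * E n z y))"
    using assms by (intro sum.cong) (simp_all add: adj_E sum_product mult_ac)
  also have "\<dots> = (\<Sum>l\<le>d. \<Sum>n\<le>d. P l i * P n j * mmult X (E l) (E n) x y)"
    unfolding mmult_def sum_distrib_left by (subst sum.swap, subst (2) sum.swap) simp
  also have "\<dots> = (\<Sum>l\<le>d. P l i * P l j * E l x y)"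
    using assms by (intro sum.cong) (simp_all add: E_orth if_distrib cong: if_cong)
  finally show ?thesis .
qed

lemma idempotent_entry_eigen:
  assumes adj_E: "\<And>j x y. j \<le> d \<Longrightarrow> x \<in> X \<Longrightarrow> y \<in> X \<Longrightarrow> adj R j x y = (\<Sum>i\<le>d. P i j * E i x y)"
    and PQ: "\<And>i l. i \<le> d \<Longrightarrow> l \<le> d \<Longrightarrow> (\<Sum>j\<le>d. P i j * Q j l) = (if i = l then m else 0)"
    and "x \<in> X" "y \<in> X" "l \<le> d"
  shows "E l x y * m = Q (R x y) l"
proof -
  have "Q (R x y) l = (\<Sum>n\<le>d. Q n l * adj R n x y)"
    using assms R_le by (simp add: adj_def if_distrib cong: if_cong)
  also have "\<dots> = (\<Sum>n\<le>d. \<Sum>i\<le>d. P i n * Q n l * E i x y)"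
    using assms by (simp add: adj_E sum_distrib_left mult_ac)
  also have "\<dots> = (\<Sum>i\<le>d. (\<Sum>n\<le>d. P i n * Q n l) * E i x y)"
    by (subst sum.swap) (simp add: sum_distrib_right)
  also have "\<dots> = (\<Sum>i\<le>d. if i = l then m * E i x y else 0)"
    using assms by (intro sum.cong) (simp_all add: PQ)
  also have "\<dots> = m * E l x y"
    using assms by simp
  finally show ?thesis
    by (simp add: mult.commute)
qed

lemma inter_num_eigenmatrix:
  assumes "first_eigenmatrix X R d P"
    and PQ: "\<And>i l. i \<le> d \<Longrightarrow> l \<le> d \<Longrightarrow> (\<Sum>j\<le>d. P i j * Q j l) = (if i = l then m else 0)"
    and "i \<le> d" "j \<le> d" "k \<le> d"
  shows "of_nat (inter_num X R i j k) * m = (\<Sum>l\<le>d. P l i * P l j * Q k l)"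
proof -
  obtain E where E_orth: "\<And>i j x y. i \<le> d \<Longrightarrow> j \<le> d \<Longrightarrow> x \<in> X \<Longrightarrow> y \<in> X \<Longrightarrow>
                     mmult X (E i) (E j) x y = (if i = j then E i x y else 0)"
    and adj_E: "\<And>j x y. j \<le> d \<Longrightarrow> x \<in> X \<Longrightarrow> y \<in> X \<Longrightarrow> adj R j x y = (\<Sum>i\<le>d. P i j * E i x y)"
    using first_eigenmatrixE[OF assms(1)] by blast
  obtain x y where xy: "x \<in> X" "y \<in> X" "R x y = k"
    using relation_nonempty assms(5) .
  have inter_num_eq: "of_nat (inter_num X R i j k) = (\<Sum>l\<le>d. P l i * P l j * E l x y)"
    using adj_product_eigen[OF E_orth adj_E xy(1,2) assms(3,4)] xy(3) by simp
  have E_entry: "E l x y * m = Q k l" if "l \<le> d" for l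
    using idempotent_entry_eigen[OF adj_E PQ xy(1,2) that] xy(3) by simp
  show ?thesis
    unfolding inter_num_eq sum_distrib_right using E_entry
    by (intro sum.cong) (simp_all flip: mult.assoc)
qed

lemma adj_combination_eq:
  assumes "x \<in> X" "y \<in> X"
  shows "adj R 0 x y + (\<Sum>i\<in>{1..d}. w i * adj R i x y) = (if x = y then 1 else w (R x y))"
proof -
  have "(\<Sum>i\<in>{1..d}. w i * adj R i x y) = (\<Sum>i\<in>{1..d}. if R x y = i then w i else 0)"
    by (intro sum.cong) (auto simp: adj_def)
  also have "\<dots> = (if R x y \<in> {1..d} then w (R x y) else 0)"
    by (rule sum.delta') simp
  also have "\<dots> = (if x = y then 0 else w (R x y))"
    using R_le[OF assms] R_eq_0_iff[OF assms] by auto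
  finally show ?thesis
    using assms R_eq_0_iff by (simp add: adj_def)
qed

lemma type_II_adj_combination_nonzero:
  assumes "type_II X (\<lambda>x y. adj R 0 x y + (\<Sum>i\<in>{1..d}. w i * adj R i x y))" "i \<in> {1..d}"
  shows "w i \<noteq> 0"
proof -
  obtain x y where xy: "x \<in> X" "y \<in> X" "R x y = i"
    using relation_nonempty[of i] assms(2) by auto
  moreover have "x \<noteq> y"
    using R_eq_0_iff[OF xy(1,2)] xy(3) assms(2) by auto
  ultimately show ?thesis
    using assms(1) adj_combination_eq[OF xy(1,2), of w] unfolding type_II_def by metis
qed

end

section \<open>Haagerup sets of matrices in the Bose-Mesner algebra\<close>

definition cross_ratio :: "('a \<Rightarrow> 'b \<Rightarrow> 'c::field) \<Rightarrow> 'a \<Rightarrow> 'a \<Rightarrow> 'b \<Rightarrow> 'b \<Rightarrow> 'c" where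
  "cross_ratio W x1 x2 y1 y2 = W x1 y1 * W x2 y2 / (W x1 y2 * W x2 y1)"

lemma haagerup_set_cross_ratio:
  "haagerup_set X W = {cross_ratio W x1 x2 y1 y2 | x1 x2 y1 y2. x1 \<in> X \<and> x2 \<in> X \<and> y1 \<in> X \<and> y2 \<in> X}"
  unfolding haagerup_set_def cross_ratio_def ..

lemma cross_ratio_swap_rows: "cross_ratio W x2 x1 y1 y2 = inverse (cross_ratio W x1 x2 y1 y2)"
  unfolding cross_ratio_def by (simp add: mult.commute)

lemma cross_ratio_swap_cols: "cross_ratio W x1 x2 y2 y1 = inverse (cross_ratio W x1 x2 y1 y2)"
  unfolding cross_ratio_def by (simp add: mult.commute)

lemma cross_ratio_swap_both: "cross_ratio W x2 x1 y2 y1 = cross_ratio W x1 x2 y1 y2"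
  unfolding cross_ratio_def by (simp add: mult.commute)

locale symmetric_association_scheme = association_scheme +
  assumes symmetric: "symmetric_scheme X R"
begin

lemma R_sym: "x \<in> X \<Longrightarrow> y \<in> X \<Longrightarrow> R x y = R y x"
  using symmetric unfolding symmetric_scheme_def by blast

lemma inter_num_diag_pos:
  assumes "i \<le> d"
  shows "0 < inter_num X R i i 0"
proof -
  obtain x y where xy: "x \<in> X" "y \<in> X" "R x y = i"
    using relation_nonempty assms .
  then have "0 < inter_num X R i i (R x x)"
    using inter_num_pos_iff[of x x i i] R_sym[of x y] assms by auto
  then show ?thesis
    using R_eq_0_iff[of x x] xy by simp
qed

end

locale scheme_matrix = symmetric_association_scheme +
  fixes w :: "nat \<Rightarrow> complex" and W :: "'a \<Rightarrow> 'a \<Rightarrow> complex"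
  assumes W_eq: "\<And>x y. x \<in> X \<Longrightarrow> y \<in> X \<Longrightarrow> W x y = (if x = y then 1 else w (R x y))"
    and w_nonzero: "\<And>i. i \<in> {1..d} \<Longrightarrow> w i \<noteq> 0"
begin

lemma W_diag: "x \<in> X \<Longrightarrow> W x x = 1"
  by (simp add: W_eq)

lemma W_rel:
  assumes "x \<in> X" "y \<in> X" "R x y = i" "i \<noteq> 0"
  shows "W x y = w i"
  using assms R_eq_0_iff[of x y] by (simp add: W_eq)

lemma W_nonzero: "x \<in> X \<Longrightarrow> y \<in> X \<Longrightarrow> W x y \<noteq> 0"
  using R_le[of x y] R_eq_0_iff[of x y] w_nonzero[of "R x y"] by (auto simp: W_eq)

lemma cross_ratio_same_row: "x \<in> X \<Longrightarrow> y1 \<in> X \<Longrightarrow> y2 \<in> X \<Longrightarrow> cross_ratio W x x y1 y2 = 1"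
  using W_nonzero[of x y1] W_nonzero[of x y2] by (simp add: cross_ratio_def mult.commute)

lemma cross_ratio_same_col: "x1 \<in> X \<Longrightarrow> x2 \<in> X \<Longrightarrow> y \<in> X \<Longrightarrow> cross_ratio W x1 x2 y y = 1"
  using W_nonzero[of x1 y] W_nonzero[of x2 y] by (simp add: cross_ratio_def mult.commute)

lemma cross_ratio_in_haagerup_set:
  "x1 \<in> X \<Longrightarrow> x2 \<in> X \<Longrightarrow> y1 \<in> X \<Longrightarrow> y2 \<in> X \<Longrightarrow> cross_ratio W x1 x2 y1 y2 \<in> haagerup_set X W"
  unfolding haagerup_set_cross_ratio by blast

(* w i1 * w i2 / (w j1 * w j2) is the cross ratio of x1, x2, y1, y2 when R x1 x2 = k,
   R x1 y1 = i1, R y1 x2 = j2, R x1 y2 = j1 and R y2 x2 = i2. *)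
definition quadrangle_quotients :: "complex set" where
  "quadrangle_quotients = {w i1 * w i2 / (w j1 * w j2) | i1 i2 j1 j2 k.
      i1 \<in> {1..d} \<and> i2 \<in> {1..d} \<and> j1 \<in> {1..d} \<and> j2 \<in> {1..d} \<and> k \<le> d
      \<and> 0 < inter_num X R i1 j2 k \<and> 0 < inter_num X R j1 i2 k}"

lemma quadrangle_quotientsI:
  assumes "i1 \<in> {1..d}" "i2 \<in> {1..d}" "j1 \<in> {1..d}" "j2 \<in> {1..d}" "k \<le> d"
    and "0 < inter_num X R i1 j2 k" "0 < inter_num X R j1 i2 k"
  shows "w i1 * w i2 / (w j1 * w j2) \<in> quadrangle_quotients"
  unfolding quadrangle_quotients_def using assms by blast

lemma square_in_haagerup_set:
  assumes "i \<in> {1..d}"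
  shows "w i ^ 2 \<in> haagerup_set X W"
proof -
  obtain x y where xy: "x \<in> X" "y \<in> X" "R x y = i"
    using relation_nonempty assms by auto
  have "cross_ratio W x y y x = w i ^ 2"
    using xy assms W_rel[of x y i] W_rel[of y x i] R_sym[of x y] W_diag
    by (simp add: cross_ratio_def power2_eq_square)
  then show ?thesis
    using cross_ratio_in_haagerup_set xy by metis
qed

lemma inverse_square_in_haagerup_set:
  assumes "i \<in> {1..d}"
  shows "inverse (w i) ^ 2 \<in> haagerup_set X W"
proof -
  obtain x y where xy: "x \<in> X" "y \<in> X" "R x y = i"
    using relation_nonempty assms by auto
  have "cross_ratio W x y x y = inverse (w i) ^ 2"
    using xy assms W_rel[of x y i] W_rel[of y x i] R_sym[of x y] W_diag
    by (simp add: cross_ratio_def power2_eq_square divide_inverse)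
  then show ?thesis
    using cross_ratio_in_haagerup_set xy by metis
qed

lemma triangle_quotients_in_haagerup_set:
  assumes "i1 \<in> {1..d}" "i2 \<in> {1..d}" "i3 \<in> {1..d}" "0 < inter_num X R i2 i3 i1"
  shows "w i1 * w i2 / w i3 \<in> haagerup_set X W"
    and "inverse (w i1 * w i2 / w i3) \<in> haagerup_set X W"
proof -
  obtain x y z where xyz: "x \<in> X" "y \<in> X" "z \<in> X" "R x y = i1" "R x z = i2" "R z y = i3"
    by (rule obtain_triangle[OF assms(4)]) (use assms in auto)
  have W_xyz: "W x y = w i1" "W y x = w i1" "W x z = w i2" "W z x = w i2" "W z y = w i3" "W y z = w i3"
    using xyz assms R_sym by (auto intro!: W_rel)
  have "cross_ratio W y x x z = w i1 * w i2 / w i3"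
    using W_xyz W_diag xyz by (simp add: cross_ratio_def)
  then show "w i1 * w i2 / w i3 \<in> haagerup_set X W"
    using cross_ratio_in_haagerup_set xyz by metis
  have "cross_ratio W x z x y = inverse (w i1 * w i2 / w i3)"
    using W_xyz W_diag xyz by (simp add: cross_ratio_def)
  then show "inverse (w i1 * w i2 / w i3) \<in> haagerup_set X W"
    using cross_ratio_in_haagerup_set xyz by metis
qed

lemma quadrangle_quotients_subset_haagerup_set: "quadrangle_quotients \<subseteq> haagerup_set X W"
proof
  fix v assume "v \<in> quadrangle_quotients"
  then obtain i1 i2 j1 j2 k where
    idx: "i1 \<in> {1..d}" "i2 \<in> {1..d}" "j1 \<in> {1..d}" "j2 \<in> {1..d}" "k \<le> d"
    and pos: "0 < inter_num X R i1 j2 k" "0 < inter_num X R j1 i2 k"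
    and v: "v = w i1 * w i2 / (w j1 * w j2)"
    unfolding quadrangle_quotients_def by blast
  obtain x1 x2 where x: "x1 \<in> X" "x2 \<in> X" "R x1 x2 = k"
    using relation_nonempty idx(5) .
  obtain y1 where y1: "y1 \<in> X" "R x1 y1 = i1" "R y1 x2 = j2"
    using pos(1) inter_num_pos_iff[of x1 x2 i1 j2] x idx by auto
  obtain y2 where y2: "y2 \<in> X" "R x1 y2 = j1" "R y2 x2 = i2"
    using pos(2) inter_num_pos_iff[of x1 x2 j1 i2] x idx by auto
  have "cross_ratio W x1 x2 y1 y2 = v"
    using x y1 y2 idx R_sym[of x2 y1] R_sym[of x2 y2]
    by (simp add: cross_ratio_def v W_rel)
  then show "v \<in> haagerup_set X W"
    using cross_ratio_in_haagerup_set x y1 y2 by metis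
qed

lemma one_in_quadrangle_quotients:
  assumes "1 \<le> d"
  shows "1 \<in> quadrangle_quotients"
proof -
  have "w 1 * w 1 / (w 1 * w 1) \<in> quadrangle_quotients"
    using assms inter_num_diag_pos[of 1] by (intro quadrangle_quotientsI) auto
  then show ?thesis
    using w_nonzero[of 1] assms by simp
qed

lemma cross_ratio_generic_in_quadrangle_quotients:
  assumes pts: "x1 \<in> X" "x2 \<in> X" "y1 \<in> X" "y2 \<in> X"
    and distinct: "x1 \<noteq> y1" "x1 \<noteq> y2" "x2 \<noteq> y1" "x2 \<noteq> y2"
  shows "cross_ratio W x1 x2 y1 y2 \<in> quadrangle_quotients"
proof -
  let ?i1 = "R x1 y1" and ?i2 = "R x2 y2" and ?j1 = "R x1 y2" and ?j2 = "R x2 y1"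
  have idx: "?i1 \<in> {1..d}" "?i2 \<in> {1..d}" "?j1 \<in> {1..d}" "?j2 \<in> {1..d}"
    using pts distinct R_le R_eq_0_iff by (auto simp: Suc_le_eq)
  have "0 < inter_num X R ?i1 ?j2 (R x1 x2)" "0 < inter_num X R ?j1 ?i2 (R x1 x2)"
    using pts idx R_sym inter_num_pos_iff by auto
  moreover have "cross_ratio W x1 x2 y1 y2 = w ?i1 * w ?i2 / (w ?j1 * w ?j2)"
    using pts distinct by (simp add: cross_ratio_def W_eq)
  ultimately show ?thesis
    using idx R_le[OF pts(1,2)] by (simp add: quadrangle_quotientsI)
qed

lemma cross_ratio_diagonal:
  assumes pts: "x1 \<in> X" "x2 \<in> X" "y2 \<in> X" and distinct: "x1 \<noteq> x2" "x1 \<noteq> y2"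
  shows "cross_ratio W x1 x2 x1 y2 \<in> {inverse (w i) ^ 2 | i. i \<in> {1..d}}
      \<union> {inverse (w i1 * w i2 / w i3) | i1 i2 i3. i1 \<in> {1..d} \<and> i2 \<in> {1..d} \<and> i3 \<in> {1..d}
                                         \<and> inter_num X R i2 i3 i1 > 0}"
proof (cases "x2 = y2")
  case True
  have "R x1 x2 \<in> {1..d}"
    using pts distinct R_le R_eq_0_iff by (auto simp: Suc_le_eq)
  moreover have "cross_ratio W x1 x2 x1 y2 = inverse (w (R x1 x2)) ^ 2"
    using True pts distinct R_sym[of x1 x2]
    by (simp add: cross_ratio_def W_eq power2_eq_square divide_inverse)
  ultimately show ?thesis
    by blast
next
  case False
  let ?i1 = "R x1 y2" and ?i2 = "R x1 x2" and ?i3 = "R x2 y2"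
  have "?i1 \<in> {1..d}" "?i2 \<in> {1..d}" "?i3 \<in> {1..d}"
    using pts distinct False R_le R_eq_0_iff by (auto simp: Suc_le_eq)
  moreover have "0 < inter_num X R ?i2 ?i3 ?i1"
    using pts R_le inter_num_pos_iff by auto
  moreover have "cross_ratio W x1 x2 x1 y2 = inverse (w ?i1 * w ?i2 / w ?i3)"
    using False pts distinct R_sym[of x1 x2] by (simp add: cross_ratio_def W_eq)
  ultimately show ?thesis
    by blast
qed

lemma inverse_cross_ratio_diagonal:
  assumes "x1 \<in> X" "x2 \<in> X" "y2 \<in> X" "x1 \<noteq> x2" "x1 \<noteq> y2"
  shows "inverse (cross_ratio W x1 x2 x1 y2) \<in> {w i ^ 2 | i. i \<in> {1..d}}
      \<union> {w i1 * w i2 / w i3 | i1 i2 i3. i1 \<in> {1..d} \<and> i2 \<in> {1..d} \<and> i3 \<in> {1..d}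
                                         \<and> inter_num X R i2 i3 i1 > 0}"
proof -
  from cross_ratio_diagonal[OF assms] consider
      i where "i \<in> {1..d}" "cross_ratio W x1 x2 x1 y2 = inverse (w i) ^ 2"
    | i1 i2 i3 where "i1 \<in> {1..d}" "i2 \<in> {1..d}" "i3 \<in> {1..d}" "inter_num X R i2 i3 i1 > 0"
        "cross_ratio W x1 x2 x1 y2 = inverse (w i1 * w i2 / w i3)"
    by blast
  then show ?thesis
  proof cases
    case (1 i)
    then have "inverse (cross_ratio W x1 x2 x1 y2) = w i ^ 2"
      by (simp add: power_inverse)
    then show ?thesis
      using 1 by blast
  next
    case (2 i1 i2 i3)
    then show ?thesis
      by auto
  qed
qed

lemma haagerup_set_subset:
  assumes "1 \<le> d"
  shows "haagerup_set X W \<subseteq>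
           {w i ^ 2 | i. i \<in> {1..d}} \<union> {inverse (w i) ^ 2 | i. i \<in> {1..d}}
         \<union> {w i1 * w i2 / w i3 | i1 i2 i3. i1 \<in> {1..d} \<and> i2 \<in> {1..d} \<and> i3 \<in> {1..d}
                                         \<and> inter_num X R i2 i3 i1 > 0}
         \<union> {inverse (w i1 * w i2 / w i3) | i1 i2 i3. i1 \<in> {1..d} \<and> i2 \<in> {1..d} \<and> i3 \<in> {1..d}
                                         \<and> inter_num X R i2 i3 i1 > 0}
         \<union> quadrangle_quotients"
    (is "_ \<subseteq> ?U")
proof
  fix v assume "v \<in> haagerup_set X W"
  then obtain x1 x2 y1 y2 where pts: "x1 \<in> X" "x2 \<in> X" "y1 \<in> X" "y2 \<in> X"
    and v: "v = cross_ratio W x1 x2 y1 y2"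
    unfolding haagerup_set_cross_ratio by blast
  consider "x1 = x2 \<or> y1 = y2" | "x1 \<noteq> x2" "y1 \<noteq> y2" "x1 = y1" | "x1 \<noteq> x2" "y1 \<noteq> y2" "x2 = y2"
    | "x1 \<noteq> x2" "y1 \<noteq> y2" "x1 = y2" | "x1 \<noteq> x2" "y1 \<noteq> y2" "x2 = y1"
    | "x1 \<noteq> y1" "x1 \<noteq> y2" "x2 \<noteq> y1" "x2 \<noteq> y2"
    by blast
  then show "v \<in> ?U"
  proof cases
    case 1
    then have "v = 1"
      using pts cross_ratio_same_row cross_ratio_same_col v by blast
    then show ?thesis
      using one_in_quadrangle_quotients assms by blast
  next
    case 2
    then show ?thesis
      using cross_ratio_diagonal[of x1 x2 y2] pts v by blast
  next
    case 3
    then have "v = cross_ratio W x2 x1 x2 y1"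
      using v cross_ratio_swap_both[of W x2 x1 y2 y1] by simp
    then show ?thesis
      using cross_ratio_diagonal[of x2 x1 y1] 3 pts by blast
  next
    case 4
    then have "v = inverse (cross_ratio W x1 x2 x1 y1)"
      using v cross_ratio_swap_cols[of W x1 x2 y2 y1] by simp
    then show ?thesis
      using inverse_cross_ratio_diagonal[of x1 x2 y1] 4 pts by blast
  next
    case 5
    then have "v = inverse (cross_ratio W x2 x1 x2 y2)"
      using v cross_ratio_swap_rows[of W x2 x1 y1 y2] by simp
    then show ?thesis
      using inverse_cross_ratio_diagonal[of x2 x1 y2] 5 pts by blast
  next
    case 6
    then show ?thesis
      using cross_ratio_generic_in_quadrangle_quotients pts v by blast
  qed
qed

theorem haagerup_set_eq:
  assumes "1 \<le> d"
  shows "haagerup_set X W =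
           {w i ^ 2 | i. i \<in> {1..d}} \<union> {inverse (w i) ^ 2 | i. i \<in> {1..d}}
         \<union> {w i1 * w i2 / w i3 | i1 i2 i3. i1 \<in> {1..d} \<and> i2 \<in> {1..d} \<and> i3 \<in> {1..d}
                                         \<and> inter_num X R i2 i3 i1 > 0}
         \<union> {inverse (w i1 * w i2 / w i3) | i1 i2 i3. i1 \<in> {1..d} \<and> i2 \<in> {1..d} \<and> i3 \<in> {1..d}
                                         \<and> inter_num X R i2 i3 i1 > 0}
         \<union> quadrangle_quotients"
    (is "_ = ?U")
proof (rule subset_antisym[OF haagerup_set_subset[OF assms]])
  show "?U \<subseteq> haagerup_set X W"
    using square_in_haagerup_set inverse_square_in_haagerup_set triangle_quotients_in_haagerup_set
      quadrangle_quotients_subset_haagerup_set by blast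
qed

lemma quotient_in_quadrangle_quotients:
  assumes "a \<in> {1..d}" "c \<in> {1..d}" "t \<in> {1..d}" "k \<le> d"
    and "0 < inter_num X R a t k" "0 < inter_num X R c t k"
  shows "w a / w c \<in> quadrangle_quotients"
proof -
  have "w a * w t / (w c * w t) \<in> quadrangle_quotients"
    using assms by (intro quadrangle_quotientsI)
  then show ?thesis
    using w_nonzero assms(3) by simp
qed

lemma quadrangle_quotients_eq_all:
  assumes "k \<le> d" "t \<in> {1..d}" "t \<noteq> s"
    and pos: "\<And>i j. i \<in> {1..d} \<Longrightarrow> j \<in> {1..d} \<Longrightarrow> (i, j) \<noteq> (s, s) \<Longrightarrow> 0 < inter_num X R i j k"
  shows "quadrangle_quotients = {w i1 * w i2 / (w j1 * w j2) | i1 i2 j1 j2.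
           i1 \<in> {1..d} \<and> i2 \<in> {1..d} \<and> j1 \<in> {1..d} \<and> j2 \<in> {1..d}}"
    (is "_ = ?all")
proof
  show "quadrangle_quotients \<subseteq> ?all"
    unfolding quadrangle_quotients_def by blast
  have ratio: "w a / w c \<in> quadrangle_quotients" if "a \<in> {1..d}" "c \<in> {1..d}" for a c
    using that assms pos[of a t] pos[of c t] by (intro quotient_in_quadrangle_quotients[where t = t]) auto
  show "?all \<subseteq> quadrangle_quotients"
  proof
    fix v assume "v \<in> ?all"
    then obtain i1 i2 j1 j2 where idx: "i1 \<in> {1..d}" "i2 \<in> {1..d}" "j1 \<in> {1..d}" "j2 \<in> {1..d}"
      and v: "v = w i1 * w i2 / (w j1 * w j2)"
      by blast
    have nonzero: "w i1 \<noteq> 0" "w i2 \<noteq> 0"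
      using idx w_nonzero by auto
    consider "i1 = j1" | "i1 = j2" | "i2 = j1" | "i2 = j2" | "i1 \<noteq> j2" "j1 \<noteq> i2"
      by blast
    then show "v \<in> quadrangle_quotients"
    proof cases
      case 1
      then show ?thesis
        using ratio[of i2 j2] idx nonzero by (simp add: v)
    next
      case 2
      then show ?thesis
        using ratio[of i2 j1] idx nonzero by (simp add: v)
    next
      case 3
      then show ?thesis
        using ratio[of i1 j2] idx nonzero by (simp add: v)
    next
      case 4
      then show ?thesis
        using ratio[of i1 j1] idx nonzero by (simp add: v)
    next
      case 5
      then show ?thesis
        unfolding v using pos[of i1 j2] pos[of j1 i2] idx assms(1) by (intro quadrangle_quotientsI) auto
    qed
  qed
qed

end

section \<open>The scheme with first eigenmatrix P_q\<close>

(* 2q times the second eigenmatrix |X| P^-1 with |X| = q^2 - 1. *)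
definition Q_q :: "nat \<Rightarrow> nat \<Rightarrow> nat \<Rightarrow> complex" where
  "Q_q q i j = (let c = (of_nat q :: complex) in
     [[2*c, c*(c-2)*(c+1), 2*c^2, c*(c-2)*(c+1)],
      [2*c, c*(c+1), -2*c, -c*(c+1)],
      [2*c, -(c-2)*(c+1), -2*c, (c-2)*(c+1)],
      [2*c, -c*(c+1), 2*c^2, -c*(c+1)]] ! i ! j)"

definition p2_q :: "nat \<Rightarrow> nat \<Rightarrow> nat \<Rightarrow> complex" where
  "p2_q q i j = (let c = (of_nat q :: complex) in
     [[0, 0, 1, 0],
      [0, (c-2)^2/4, c*(c-2)/4, (c-2)/2],
      [1, c*(c-2)/4, c^2/4, (c-2)/2],
      [0, (c-2)/2, (c-2)/2, 0]] ! i ! j)"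

lemma sum_atMost_3: "(\<Sum>l\<le>3::nat. f l) = f 0 + f 1 + f 2 + f 3"
  by (simp add: numeral_3_eq_3 numeral_2_eq_2 atMost_Suc add_ac)

lemma P_q_mult_Q_q:
  assumes "i \<le> 3" "l \<le> 3"
  shows "(\<Sum>j\<le>3. P_q q i j * Q_q q j l) = (if i = l then 2 * of_nat q * (of_nat q ^ 2 - 1) else 0)"
proof -
  have "i \<in> {0,1,2,3}" "l \<in> {0,1,2,3}"
    using assms by auto
  then show ?thesis
    unfolding sum_atMost_3
    apply (elim insertE emptyE)
    apply (simp_all add: P_q_def Q_q_def Let_def)
    apply (simp_all add: algebra_simps power2_eq_square)
    apply (simp_all add: field_simps)
    done
qed

lemma inter_num_2_P_q:
  assumes "association_scheme X R 3" "first_eigenmatrix X R 3 (P_q q)" "q \<ge> 2" "i \<le> 3" "j \<le> 3"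
  shows "of_nat (inter_num X R i j 2) = p2_q q i j"
proof -
  let ?m = "2 * of_nat q * (of_nat q ^ 2 - 1) :: complex"
  have "q ^ 2 \<noteq> 1"
    using assms(3) by (simp add: power2_eq_square)
  then have "(of_nat q :: complex) ^ 2 \<noteq> 1"
    by (metis of_nat_eq_1_iff of_nat_power)
  then have "?m \<noteq> 0"
    using assms(3) by simp
  have "of_nat (inter_num X R i j 2) * ?m = (\<Sum>l\<le>3. P_q q l i * P_q q l j * Q_q q 2 l)"
    using assms by (intro association_scheme.inter_num_eigenmatrix P_q_mult_Q_q) simp_all
  also have "\<dots> = p2_q q i j * ?m"
  proof -
    have "i \<in> {0,1,2,3}" "j \<in> {0,1,2,3}"
      using assms by auto
    then show ?thesis
      unfolding sum_atMost_3
      apply (elim insertE emptyE)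
      apply (simp_all add: P_q_def Q_q_def p2_q_def Let_def)
      apply (simp_all add: algebra_simps power2_eq_square)
      apply (simp_all add: field_simps power4_eq_xxxx)
      done
  qed
  finally show ?thesis
    using \<open>?m \<noteq> 0\<close> by simp
qed

lemma inter_num_2_P_q_pos:
  assumes "association_scheme X R 3" "first_eigenmatrix X R 3 (P_q q)" "q \<ge> 3"
    and "i \<in> {1..3}" "j \<in> {1..3}" "(i, j) \<noteq> (3, 3)"
  shows "0 < inter_num X R i j 2"
proof -
  have "(of_nat q :: complex) \<noteq> 0" "(of_nat q :: complex) \<noteq> 2"
    using assms(3) of_nat_eq_iff[of q 2, where 'a = complex] by simp_all
  moreover have "i \<in> {1,2,3}" "j \<in> {1,2,3}"
    using assms(4,5) by auto
  ultimately have "p2_q q i j \<noteq> 0"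
    using assms(6) by (elim insertE emptyE) (simp_all add: p2_q_def Let_def)
  moreover have "of_nat (inter_num X R i j 2) = p2_q q i j"
    using assms by (intro inter_num_2_P_q) auto
  ultimately show ?thesis
    by (metis gr0I of_nat_0)
qed

theorem lemma5p4:
  fixes q :: nat and X :: "'a set" and R :: "'a \<Rightarrow> 'a \<Rightarrow> nat" and w :: "nat \<Rightarrow> complex"
  assumes "even q" and "q \<ge> 4"
    and "assoc_scheme X R 3" and "symmetric_scheme X R"
    and "first_eigenmatrix X R 3 (P_q q)"
    and "type_II X (\<lambda>x y. adj R 0 x y + (\<Sum>i\<in>{1..3}. w i * adj R i x y))"
  shows "haagerup_set X (\<lambda>x y. adj R 0 x y + (\<Sum>i\<in>{1..3}. w i * adj R i x y)) =
           {w i ^ 2 | i. i \<in> {1..3}} \<union> {inverse (w i) ^ 2 | i. i \<in> {1..3}}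
         \<union> {w i1 * w i2 / w i3 | i1 i2 i3. i1 \<in> {1..3} \<and> i2 \<in> {1..3} \<and> i3 \<in> {1..3}
                                         \<and> inter_num X R i2 i3 i1 > 0}
         \<union> {inverse (w i1 * w i2 / w i3) | i1 i2 i3. i1 \<in> {1..3} \<and> i2 \<in> {1..3} \<and> i3 \<in> {1..3}
                                         \<and> inter_num X R i2 i3 i1 > 0}
         \<union> {w i1 * w i2 / (w j1 * w j2) | i1 i2 j1 j2.
               i1 \<in> {1..3} \<and> i2 \<in> {1..3} \<and> j1 \<in> {1..3} \<and> j2 \<in> {1..3}}"
proof -
  let ?W = "\<lambda>x y. adj R 0 x y + (\<Sum>i\<in>{1..3}. w i * adj R i x y)"
  interpret symmetric_association_scheme X R 3
    using assms(3,4) by unfold_locales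
  interpret scheme_matrix X R 3 w ?W
    using adj_combination_eq type_II_adj_combination_nonzero[OF assms(6)] by unfold_locales
  have "0 < inter_num X R i j 2" if "i \<in> {1..3}" "j \<in> {1..3}" "(i, j) \<noteq> (3, 3)" for i j
    using inter_num_2_P_q_pos[OF association_scheme_axioms assms(5) _ that] assms(2) by simp
  then have "quadrangle_quotients = {w i1 * w i2 / (w j1 * w j2) | i1 i2 j1 j2.
               i1 \<in> {1..3} \<and> i2 \<in> {1..3} \<and> j1 \<in> {1..3} \<and> j2 \<in> {1..3}}"
    by (intro quadrangle_quotients_eq_all[where k = 2 and t = 1 and s = 3]) auto
  then show ?thesis
    by (simp only: haagerup_set_eq[OF one_le_numeral])
qed

end
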